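(* Under the GoRank setting described in the context, for every node $k\in[n]$ and every $t\ge 1$, $$\big|\mathbb{E}[R_k(t)]-r_k\big|\le \frac{\sigma_k}{c\,t},$$ where $c=\lambda_2/|E|$ and $\sigma_k=n^{3/2}\,\phi\big((r_k-1)/n\big)$ with $\phi(u)=\sqrt{u(1-u)}$. In particular $\lim_{t\to\infty}\mathbb{E}[R_k(t)]=r_k$.
   Context: Let $n\ge 2$ and let $\mathcal G=(V,E)$ be a connected, non-bipartite, undirected graph with vertex set $V=[n]$; $\mathbf{L}=\mathbf{D}-\mathbf{A}$ is its Laplacian (degree matrix minus adjacency matrix) and $\lambda_2>0$ the second smallest eigenvalue of $\mathbf{L}$. Node $k$ holds a real observation $X_k$, the $X_k$ being pairwise distinct, and its rank is $r_k=1+\sum_{l=1}^n\mathbb{I}_{\{X_k>X_l\}}$. Algorithm GoRank: initialize $Y_k(0)=X_k$ and $R'_k(0)=0$ for all $k$. At each iteration $s=1,2,\dots$: (i) every node $k$ sets $R'_k(s)=(1-1/s)R'_k(s-1)+(1/s)\,\mathbb{I}_{\{X_k>Y_k(s-1)\}}$ and $R_k(s)=nR'_k(s)+1$; (ii) an edge $(i,j)\in E$ is drawn uniformly at random from $E$, independently of everything before; (iii) the auxiliary values are swapped: $Y_i(s)=Y_j(s-1)$, $Y_j(s)=Y_i(s-1)$, others unchanged. Expectations are over the random edge sampling. *)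

theory Defs
  imports "HOL-Probability.Probability" "Jordan_Normal_Form.Char_Poly"
begin

definition simple_graph :: "nat \<Rightarrow> nat set set \<Rightarrow> bool" where
  "simple_graph n E \<longleftrightarrow> (\<forall>e\<in>E. e \<subseteq> {1..n} \<and> card e = 2)"

definition adj :: "nat set set \<Rightarrow> (nat \<times> nat) set" where
  "adj E = {(u, v). {u, v} \<in> E}"

definition connected_graph :: "nat \<Rightarrow> nat set set \<Rightarrow> bool" where
  "connected_graph n E \<longleftrightarrow> (\<forall>u\<in>{1..n}. \<forall>v\<in>{1..n}. (u, v) \<in> (adj E)\<^sup>*)"

definition bipartite :: "nat \<Rightarrow> nat set set \<Rightarrow> bool" where
  "bipartite n E \<longleftrightarrow> (\<exists>A. A \<subseteq> {1..n} \<and> (\<forall>e\<in>E. card (e \<inter> A) = 1))"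

definition degree :: "nat set set \<Rightarrow> nat \<Rightarrow> nat" where
  "degree E v = card {e\<in>E. v \<in> e}"

text \<open>Laplacian L = D - A as an n x n real matrix; row/column index i corresponds to vertex i+1.\<close>
definition laplacian :: "nat \<Rightarrow> nat set set \<Rightarrow> real mat" where
  "laplacian n E = mat n n (\<lambda>(i, j).
      (if i = j then real (degree E (i + 1)) else 0) - (if {i + 1, j + 1} \<in> E then 1 else 0))"

text \<open>Second smallest eigenvalue, counting algebraic multiplicity (order as root of the
  characteristic polynomial): the least eigenvalue mu such that at least two eigenvalues
  (with multiplicity) are \<le> mu.\<close>
definition second_smallest_eigenvalue :: "real mat \<Rightarrow> real" where
  "second_smallest_eigenvalue M =
     Min {mu. eigenvalue M mu \<and>
              (\<Sum>nu\<in>{nu. eigenvalue M nu \<and> nu \<le> mu}. order nu (char_poly M)) \<ge> 2}"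

definition rank_of :: "nat \<Rightarrow> (nat \<Rightarrow> real) \<Rightarrow> nat \<Rightarrow> nat" where
  "rank_of n X k = 1 + card {l\<in>{1..n}. X k > X l}"

definition swap_edge :: "nat set \<Rightarrow> (nat \<Rightarrow> real) \<Rightarrow> (nat \<Rightarrow> real)" where
  "swap_edge e Y = (\<lambda>v. if v \<in> e then Y (the_elem (e - {v})) else Y v)"

text \<open>Joint law of the state (Y(s), R'(s)) of GoRank after s iterations.\<close>
fun gorank :: "nat set set \<Rightarrow> (nat \<Rightarrow> real) \<Rightarrow> nat \<Rightarrow> ((nat \<Rightarrow> real) \<times> (nat \<Rightarrow> real)) pmf" where
  "gorank E X 0 = return_pmf (X, (\<lambda>_. 0))"
| "gorank E X (Suc s) = bind_pmf (gorank E X s) (\<lambda>(Y, R').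
      map_pmf (\<lambda>e. (swap_edge e Y,
                     (\<lambda>k. (1 - 1 / real (Suc s)) * R' k
                          + (1 / real (Suc s)) * (if X k > Y k then 1 else 0))))
              (pmf_of_set E))"

definition expected_rank :: "nat \<Rightarrow> nat set set \<Rightarrow> (nat \<Rightarrow> real) \<Rightarrow> nat \<Rightarrow> nat \<Rightarrow> real" where
  "expected_rank n E X k t =
     measure_pmf.expectation (gorank E X t) (\<lambda>(Y, R'). real n * R' k + 1)"

definition phi :: "real \<Rightarrow> real" where
  "phi u = sqrt (u * (1 - u))"

end

theory Submission
  imports Defs "Jordan_Normal_Form.Schur_Decomposition"
begin

(*
  The expected auxiliary values evolve under the averaged swap operator
  T = I - L / |E|, so that E[R_k(t)] = (n / t) \<Sum>j<t (T^j a)(k) + 1, where a is the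
  indicator of {l. X_l < X_k}.  Expand a in an orthonormal eigenbasis of the symmetric
  Laplacian L.  Since the graph is connected, the eigenvalue 0 is simple with a constant
  eigenvector, and this mode contributes exactly r_k - 1.  Each other mode, with eigenvalue
  \<lambda>_i \<in> [\<lambda>_2, 2|E|], contributes a geometric sum \<Sum>j<t (1 - \<lambda>_i/|E|)^j of modulus at
  most |E|/\<lambda>_2; this needs \<lambda>_2 \<le> |E|, which holds as soon as n \<ge> 3, i.e. when the
  graph is not bipartite.  Cauchy-Schwarz and Parseval then bound the error by
  (n / t) (|E| / \<lambda>_2) sqrt (m - m\<^sup>2 / n) with m = r_k - 1, which is \<sigma>_k / (c t).
*)

unbundle no vec_syntax

section \<open>Spectra of real symmetric matrices\<close>

lemma index_mult_mat_sum:
  assumes "A \<in> carrier_mat nr m" "B \<in> carrier_mat m nc" "i < nr" "j < nc"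
  shows "(A * B) $$ (i, j) = (\<Sum>k<m. A $$ (i, k) * B $$ (k, j))"
  using assms by (simp add: scalar_prod_def atLeast0LessThan)

lemma real_symmetric_mat_eigenvalue_real:
  fixes A :: "real mat"
  assumes A: "A \<in> carrier_mat n n" and sym: "transpose_mat A = A"
    and ev: "eigenvector (of_real_hom.mat_hom A) v z"
  shows "Im z = 0"
proof -
  define Ac :: "complex mat" where "Ac = of_real_hom.mat_hom A"
  have Ac: "Ac \<in> carrier_mat n n" using A unfolding Ac_def by auto
  have v: "v \<in> carrier_vec n" and v0: "v \<noteq> 0\<^sub>v n" and Av: "Ac *\<^sub>v v = z \<cdot>\<^sub>v v"
    using ev Ac unfolding eigenvector_def Ac_def by auto
  have Aij: "Ac $$ (i, j) = complex_of_real (A $$ (i, j))" if "i < n" "j < n" for i j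
    using that A unfolding Ac_def by auto
  have Asym: "A $$ (i, j) = A $$ (j, i)" if "i < n" "j < n" for i j
    using that A sym by (metis carrier_matD(1) carrier_matD(2) index_transpose_mat(1))
  txt \<open>The Hermitian form \<open>s = v\<^sup>* A v\<close> is real, and equals \<open>z |v|\<^sup>2\<close>.\<close>
  define s where "s = (\<Sum>i<n. \<Sum>j<n. cnj (v $ i) * Ac $$ (i, j) * v $ j)"
  define N where "N = (\<Sum>i<n. cmod (v $ i) ^ 2)"
  have row: "(\<Sum>j<n. Ac $$ (i, j) * v $ j) = z * v $ i" if "i < n" for i
  proof -
    have "(Ac *\<^sub>v v) $ i = (\<Sum>j<n. Ac $$ (i, j) * v $ j)"
      using that Ac v by (simp add: scalar_prod_def row_def atLeast0LessThan)
    thus ?thesis using Av that v by simp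
  qed
  have "s = (\<Sum>i<n. cnj (v $ i) * (\<Sum>j<n. Ac $$ (i, j) * v $ j))"
    unfolding s_def by (simp add: sum_distrib_left mult.assoc)
  also have "\<dots> = (\<Sum>i<n. z * (cnj (v $ i) * v $ i))"
    by (intro sum.cong refl) (simp add: row)
  also have "\<dots> = (\<Sum>i<n. z * complex_of_real (cmod (v $ i) ^ 2))"
    by (simp add: complex_norm_square mult.commute del: of_real_power)
  finally have s_eq: "s = z * complex_of_real N" unfolding N_def by (simp add: sum_distrib_left)
  have "cnj s = (\<Sum>j<n. \<Sum>i<n. v $ i * Ac $$ (i, j) * cnj (v $ j))"
    unfolding s_def by (subst sum.swap) (auto intro!: sum.cong simp: Aij)
  also have "\<dots> = s" unfolding s_def
    by (auto intro!: sum.cong simp: Aij Asym mult.commute mult.left_commute)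
  finally have "Im s = 0" using Reals_cnj_iff complex_is_Real_iff by metis
  moreover have "N > 0"
  proof -
    obtain i where i: "i < n" "v $ i \<noteq> 0"
      using v v0 by (metis eq_vecI carrier_vecD index_zero_vec)
    have "cmod (v $ i) ^ 2 \<le> N" unfolding N_def by (rule member_le_sum) (use i in auto)
    thus ?thesis using i by (smt (verit) zero_less_norm_iff zero_less_power)
  qed
  ultimately show "Im z = 0" unfolding s_eq by simp
qed

lemma real_symmetric_mat_has_eigenvalue:
  fixes A :: "real mat"
  assumes A: "A \<in> carrier_mat n n" and sym: "transpose_mat A = A" and n: "n > 0"
  shows "\<exists>e. eigenvalue A e"
proof -
  let ?Ac = "of_real_hom.mat_hom A :: complex mat"
  have Ac: "?Ac \<in> carrier_mat n n" using A by auto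
  obtain as where cp: "char_poly ?Ac = (\<Prod>a\<leftarrow>as. [:- a, 1:])" and len: "length as = n"
    using char_poly_factorized[OF Ac] by auto
  obtain z zs where "as = z # zs" using len n by (cases as) auto
  hence root: "poly (char_poly ?Ac) z = 0" unfolding cp by simp
  then obtain v where "eigenvector ?Ac v z"
    using eigenvalue_root_char_poly[OF Ac] unfolding eigenvalue_def by auto
  hence "z = complex_of_real (Re z)"
    using real_symmetric_mat_eigenvalue_real[OF A sym] by (simp add: complex_eq_iff)
  hence "poly (char_poly ?Ac) (complex_of_real (Re z)) = 0" using root by simp
  hence "poly (char_poly A) (Re z) = 0" unfolding of_real_hom.char_poly_hom[OF A] by simp
  thus ?thesis using eigenvalue_root_char_poly[OF A] by blast
qed

lemma unit_vec_orthogonal_completion: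
  fixes v :: "real vec"
  assumes v: "v \<in> carrier_vec n" and v1: "v \<bullet> v = 1"
  obtains W where "W \<in> carrier_mat n n" "col W 0 = v" "transpose_mat W * W = 1\<^sub>m n"
proof -
  interpret cof_vec_space n "TYPE(real)" .
  have v0: "v \<noteq> 0\<^sub>v n" using v1 v by auto
  define b where "b = basis_completion v"
  from basis_completion[OF v v0, folded b_def]
  have dist_b: "distinct b" and indep: "\<not> lin_dep (set b)" and bc: "set b \<subseteq> carrier_vec n"
    and hdb: "hd b = v" and len_b: "length b = n" by auto
  have n: "n > 0" using len_b hdb v0 v by (cases b) auto
  from hdb len_b n obtain vs where bv: "b = v # vs" by (cases b) auto
  define ws where "ws = gram_schmidt n b"
  from gram_schmidt_result[OF bc dist_b indep ws_def]
  have wsc: "set ws \<subseteq> carrier_vec n" and orth: "corthogonal ws" and len: "length ws = n"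
    by (auto simp: len_b)
  have hdws: "hd ws = v" unfolding ws_def bv using gram_schmidt_hd[OF v] by simp
  define ws' where "ws' = map (\<lambda>w. (1 / sqrt (w \<bullet> w)) \<cdot>\<^sub>v w) ws"
  define W where "W = mat_of_cols n ws'"
  have len': "length ws' = n" unfolding ws'_def using len by simp
  have wsc': "ws' ! i \<in> carrier_vec n" if "i < n" for i
    using that wsc len unfolding ws'_def by auto
  have W: "W \<in> carrier_mat n n" unfolding W_def using len' by auto
  have colW: "col W i = ws' ! i" if "i < n" for i
    unfolding W_def using that len' wsc' by simp
  have dot: "ws' ! i \<bullet> ws' ! j = (if i = j then 1 else 0)" if "i < n" "j < n" for i j
  proof -
    have ci: "ws ! i \<in> carrier_vec n" "ws ! j \<in> carrier_vec n" using that wsc len by auto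
    have oij: "ws ! i \<bullet> ws ! j = 0 \<longleftrightarrow> i \<noteq> j"
      using corthogonalD[OF orth, of i j] that len by (simp add: conjugate_vec_def)
    have pos: "ws ! i \<bullet> ws ! i \<ge> 0" by (simp add: scalar_prod_def sum_nonneg)
    have "ws' ! i \<bullet> ws' ! j
        = (1 / sqrt (ws ! i \<bullet> ws ! i)) * (1 / sqrt (ws ! j \<bullet> ws ! j)) * (ws ! i \<bullet> ws ! j)"
      unfolding ws'_def using that len ci by simp
    thus ?thesis using oij pos by (auto simp: field_simps)
  qed
  have "transpose_mat W * W = 1\<^sub>m n"
    by (rule eq_matI) (use W in \<open>auto simp: colW dot\<close>)
  moreover have "col W 0 = v"
    using colW[OF n] hdws len n v1 unfolding ws'_def by (cases ws) auto
  ultimately show ?thesis using W that by blast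
qed

definition border_mat :: "'a::zero \<Rightarrow> 'a mat \<Rightarrow> 'a mat" where
  "border_mat a M = mat (Suc (dim_row M)) (Suc (dim_col M))
     (\<lambda>(i, j). if i = 0 \<and> j = 0 then a else if i = 0 \<or> j = 0 then 0 else M $$ (i - 1, j - 1))"

lemma border_mat_carrier [simp]:
  "M \<in> carrier_mat nr nc \<Longrightarrow> border_mat a M \<in> carrier_mat (Suc nr) (Suc nc)"
  unfolding border_mat_def by auto

lemma border_mat_mult:
  assumes M: "M \<in> carrier_mat nr m" and N: "N \<in> carrier_mat m nc"
  shows "border_mat a M * border_mat b N = border_mat (a * b) (M * N)"
proof (rule eq_matI)
  fix i j assume "i < dim_row (border_mat (a * b) (M * N))" "j < dim_col (border_mat (a * b) (M * N))"
  hence i: "i < Suc nr" and j: "j < Suc nc" using M N by (auto simp: border_mat_def)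
  have "(border_mat a M * border_mat b N) $$ (i, j)
      = (\<Sum>k<Suc m. border_mat a M $$ (i, k) * border_mat b N $$ (k, j))"
    using M N i j by (intro index_mult_mat_sum) auto
  also have "\<dots> = border_mat a M $$ (i, 0) * border_mat b N $$ (0, j)
      + (\<Sum>k<m. border_mat a M $$ (i, Suc k) * border_mat b N $$ (Suc k, j))"
    by (rule sum.lessThan_Suc_shift)
  also have "\<dots> = border_mat (a * b) (M * N) $$ (i, j)"
    using M N i j by (cases i; cases j) (auto simp: border_mat_def scalar_prod_def atLeast0LessThan)
  finally show "(border_mat a M * border_mat b N) $$ (i, j) = border_mat (a * b) (M * N) $$ (i, j)" .
qed (use M N in \<open>auto simp: border_mat_def\<close>)

lemma transpose_border_mat: "transpose_mat (border_mat a M) = border_mat a (transpose_mat M)"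
  by (rule eq_matI) (auto simp: border_mat_def)

lemma border_mat_one: "border_mat 1 (1\<^sub>m m) = 1\<^sub>m (Suc m)"
  by (rule eq_matI) (auto simp: border_mat_def)

lemma mat_diag_Suc: "mat_diag (Suc m) d = border_mat (d 0) (mat_diag m (\<lambda>i. d (Suc i)))"
  by (rule eq_matI) (auto simp: border_mat_def mat_diag_def)

lemma border_mat_of_zero_border:
  assumes A: "A \<in> carrier_mat (Suc m) (Suc m)"
    and col0: "\<And>i. 0 < i \<Longrightarrow> i < Suc m \<Longrightarrow> A $$ (i, 0) = 0"
    and row0: "\<And>j. 0 < j \<Longrightarrow> j < Suc m \<Longrightarrow> A $$ (0, j) = 0"
  shows "A = border_mat (A $$ (0, 0)) (mat m m (\<lambda>(i, j). A $$ (Suc i, Suc j)))"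
  by (rule eq_matI) (use A col0 row0 in \<open>auto simp: border_mat_def\<close>)

lemma real_symmetric_mat_deflation:
  fixes A :: "real mat"
  assumes A: "A \<in> carrier_mat (Suc m) (Suc m)" and sym: "transpose_mat A = A"
  obtains W e A3 where "W \<in> carrier_mat (Suc m) (Suc m)" "transpose_mat W * W = 1\<^sub>m (Suc m)"
    "A3 \<in> carrier_mat m m" "transpose_mat A3 = A3" "transpose_mat W * A * W = border_mat e A3"
proof -
  let ?n = "Suc m"
  obtain e v0 where "eigenvector A v0 e"
    using real_symmetric_mat_has_eigenvalue[OF A sym] unfolding eigenvalue_def by auto
  hence v0: "v0 \<in> carrier_vec ?n" "v0 \<noteq> 0\<^sub>v ?n" and Av0: "A *\<^sub>v v0 = e \<cdot>\<^sub>v v0"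
    using A unfolding eigenvector_def by auto
  have "v0 \<bullet> v0 > 0" using conjugate_square_greater_0_vec[OF v0(1)] v0(2) by simp
  define v where "v = (1 / sqrt (v0 \<bullet> v0)) \<cdot>\<^sub>v v0"
  have v: "v \<in> carrier_vec ?n" "v \<bullet> v = 1" "A *\<^sub>v v = e \<cdot>\<^sub>v v"
    unfolding v_def using A v0 Av0 \<open>v0 \<bullet> v0 > 0\<close>
    by (auto simp: mult_mat_vec smult_smult_assoc mult.commute)
  obtain W where W: "W \<in> carrier_mat ?n ?n" and W0: "col W 0 = v"
    and WtW: "transpose_mat W * W = 1\<^sub>m ?n"
    using unit_vec_orthogonal_completion[OF v(1,2)] by blast
  define A' where "A' = transpose_mat W * A * W"
  have A': "A' \<in> carrier_mat ?n ?n" unfolding A'_def using W A by simp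
  have "transpose_mat A' = transpose_mat W * transpose_mat (transpose_mat W * A)"
    unfolding A'_def using W A by (subst transpose_mult[of _ ?n ?n]) auto
  also have "transpose_mat (transpose_mat W * A) = transpose_mat A * W"
    using W A by (subst transpose_mult[of _ ?n ?n]) auto
  finally have "transpose_mat A' = A'"
    unfolding A'_def sym using W A by (simp add: assoc_mult_mat[of _ ?n ?n _ ?n _ ?n])
  hence A'_swap: "A' $$ (i, j) = A' $$ (j, i)" if "i < ?n" "j < ?n" for i j
    using that A' by (metis carrier_matD index_transpose_mat(1))
  have A'_col0: "A' $$ (i, 0) = (if i = 0 then e else 0)" if i: "i < ?n" for i
  proof -
    have "A' $$ (i, 0) = col W i \<bullet> (A *\<^sub>v col W 0)"
      unfolding A'_def using i W A by (simp add: assoc_mult_mat[of _ ?n ?n _ ?n _ ?n] mult_mat_vec_def)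
    also have "\<dots> = e * (col W i \<bullet> col W 0)" using W0 v W i by simp
    also have "col W i \<bullet> col W 0 = (transpose_mat W * W) $$ (i, 0)" using i W by simp
    finally show ?thesis unfolding WtW using i by simp
  qed
  have A'_row0: "A' $$ (0, j) = (if j = 0 then e else 0)" if "j < ?n" for j
    using A'_col0[OF that] A'_swap[OF _ that] by simp
  define A3 where "A3 = mat m m (\<lambda>(i, j). A' $$ (Suc i, Suc j))"
  have "A' = border_mat e A3"
    unfolding A3_def using border_mat_of_zero_border[OF A'] A'_col0 A'_row0 by simp
  moreover have "transpose_mat A3 = A3"
    unfolding A3_def by (rule eq_matI) (auto simp: A'_swap)
  moreover have "A3 \<in> carrier_mat m m" unfolding A3_def by simp
  ultimately show ?thesis using that W WtW unfolding A'_def by blast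
qed

lemma orthogonal_mat_mult:
  fixes W B :: "'a :: comm_ring_1 mat"
  assumes "W \<in> carrier_mat n n" "B \<in> carrier_mat n n"
    and "transpose_mat W * W = 1\<^sub>m n" "transpose_mat B * B = 1\<^sub>m n"
  shows "transpose_mat (W * B) * (W * B) = 1\<^sub>m n"
proof -
  have "transpose_mat (W * B) = transpose_mat B * transpose_mat W"
    using assms(1,2) by (rule transpose_mult)
  hence "transpose_mat (W * B) * (W * B) = transpose_mat B * (transpose_mat W * W) * B"
    using assms(1,2) by (simp add: assoc_mult_mat[of _ n n _ n _ n] mult_carrier_mat[of _ n n _ n])
  thus ?thesis using assms by simp
qed

lemma real_symmetric_orthogonal_diagonalization:
  fixes A :: "real mat"
  assumes "A \<in> carrier_mat n n" and "transpose_mat A = A"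
  shows "\<exists>U d. U \<in> carrier_mat n n \<and> transpose_mat U * U = 1\<^sub>m n
                 \<and> A = U * mat_diag n d * transpose_mat U"
  using assms
proof (induction n arbitrary: A)
  case 0
  thus ?case by (intro exI[of _ "1\<^sub>m 0"] exI) (auto intro!: eq_matI)
next
  case (Suc m A)
  let ?n = "Suc m"
  have A: "A \<in> carrier_mat ?n ?n" using Suc.prems by simp
  obtain W e A3 where W: "W \<in> carrier_mat ?n ?n" and WtW: "transpose_mat W * W = 1\<^sub>m ?n"
    and "A3 \<in> carrier_mat m m" "transpose_mat A3 = A3"
    and WAW: "transpose_mat W * A * W = border_mat e A3"
    using real_symmetric_mat_deflation[OF A] Suc.prems by blast
  then obtain U3 d3 where U3: "U3 \<in> carrier_mat m m" and U3tU3: "transpose_mat U3 * U3 = 1\<^sub>m m"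
    and A3_eq: "A3 = U3 * mat_diag m d3 * transpose_mat U3"
    using Suc.IH by blast
  define B where "B = border_mat 1 U3"
  define d where "d = case_nat e d3"
  have B: "B \<in> carrier_mat ?n ?n" unfolding B_def using U3 by auto
  have BtB: "transpose_mat B * B = 1\<^sub>m ?n"
    unfolding B_def transpose_border_mat using U3 by (simp add: border_mat_mult U3tU3 border_mat_one)
  have "B * mat_diag ?n d = border_mat e (U3 * mat_diag m d3)"
    unfolding B_def mat_diag_Suc d_def using border_mat_mult[OF U3 mat_diag_dim] by simp
  hence BDB: "transpose_mat W * A * W = B * mat_diag ?n d * transpose_mat B"
    unfolding WAW A3_eq B_def transpose_border_mat using U3 by (simp add: border_mat_mult[of _ m m _ m])
  have WWt: "W * transpose_mat W = 1\<^sub>m ?n"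
    by (rule mat_mult_left_right_inverse[OF _ W WtW]) (use W in simp)
  have "(W * B) * mat_diag ?n d * transpose_mat (W * B)
      = W * (transpose_mat W * A * W) * transpose_mat W"
    unfolding BDB using W B
    by (simp add: transpose_mult[of _ ?n ?n] assoc_mult_mat[of _ ?n ?n _ ?n _ ?n]
                  mult_carrier_mat[of _ ?n ?n _ ?n])
  also have "\<dots> = (W * transpose_mat W) * A * (W * transpose_mat W)"
    using W A by (simp add: assoc_mult_mat[of _ ?n ?n _ ?n _ ?n] mult_carrier_mat[of _ ?n ?n _ ?n])
  also have "\<dots> = A" unfolding WWt using A by simp
  finally have "A = (W * B) * mat_diag ?n d * transpose_mat (W * B)" by simp
  moreover have "W * B \<in> carrier_mat ?n ?n" using W B by simp
  ultimately show ?case using orthogonal_mat_mult[OF W B WtW BtB] by blast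
qed

lemma order_prod_linear_factors:
  fixes as :: "'a::idom list"
  shows "Polynomial.order x (\<Prod>a\<leftarrow>as. [:- a, 1:]) = length (filter (\<lambda>a. a = x) as)"
proof (induction as)
  case (Cons a as)
  let ?P = "\<Prod>a\<leftarrow>as. [:- a, 1:]"
  have "?P \<noteq> 0" unfolding prod_list_zero_iff by auto
  hence "[:- a, 1:] * ?P \<noteq> 0" by (intro no_zero_divisors) simp_all
  hence "Polynomial.order x (\<Prod>b\<leftarrow>a # as. [:- b, 1:])
       = Polynomial.order x [:- a, 1:] + Polynomial.order x ?P"
    unfolding list.map prod_list.Cons by (rule order_mult)
  moreover have "Polynomial.order x [:- a, 1:] = (if x = a then 1 else 0)"
    using order_power_n_n[of a 1] by (auto intro: order_0I)
  ultimately show ?case using Cons.IH by simp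
qed simp

lemma second_smallest_eigenvalue_eq:
  fixes M :: "real mat" and d :: "nat \<Rightarrow> real"
  assumes M: "M \<in> carrier_mat n n" and cp: "char_poly M = (\<Prod>a\<leftarrow>map d [0..<n]. [:- a, 1:])"
    and i0: "i0 < n" and min: "\<And>i. i < n \<Longrightarrow> i \<noteq> i0 \<Longrightarrow> d i0 < d i" and n: "2 \<le> n"
  shows "second_smallest_eigenvalue M = Min (d ` ({..<n} - {i0}))"
proof -
  have cp_ne: "char_poly M \<noteq> 0" unfolding cp prod_list_zero_iff by auto
  have order: "Polynomial.order x (char_poly M) = card {i. i < n \<and> d i = x}" for x
  proof -
    have "length (filter (\<lambda>a. a = x) (map d [0..<n])) = length (filter (\<lambda>i. d i = x) [0..<n])"
      by (simp add: filter_map comp_def)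
    also have "\<dots> = card {i. i < n \<and> d i = x}"
      unfolding length_filter_conv_card by (rule arg_cong[where f = card]) auto
    finally show ?thesis unfolding cp order_prod_linear_factors .
  qed
  have eigenvalue: "eigenvalue M x \<longleftrightarrow> (\<exists>i<n. d i = x)" for x
  proof -
    have "eigenvalue M x \<longleftrightarrow> card {i. i < n \<and> d i = x} > 0"
      unfolding eigenvalue_root_char_poly[OF M] order[symmetric] order_gt_0_iff[OF cp_ne] ..
    thus ?thesis by (auto simp: card_gt_0_iff)
  qed
  have count: "(\<Sum>\<nu>\<in>{\<nu>. eigenvalue M \<nu> \<and> \<nu> \<le> \<mu>}. Polynomial.order \<nu> (char_poly M))
             = card {i. i < n \<and> d i \<le> \<mu>}" for \<mu>
  proof -
    let ?A = "{i. i < n \<and> d i \<le> \<mu>}"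
    have "{\<nu>. eigenvalue M \<nu> \<and> \<nu> \<le> \<mu>} = d ` ?A" unfolding eigenvalue by auto
    moreover have "(\<Sum>\<nu>\<in>d ` ?A. Polynomial.order \<nu> (char_poly M)) = (\<Sum>\<nu>\<in>d ` ?A. \<Sum>i\<in>{i \<in> ?A. d i = \<nu>}. 1)"
    proof (rule sum.cong[OF refl])
      fix \<nu> assume "\<nu> \<in> d ` ?A"
      hence "{i. i < n \<and> d i = \<nu>} = {i \<in> ?A. d i = \<nu>}" by auto
      thus "Polynomial.order \<nu> (char_poly M) = (\<Sum>i\<in>{i \<in> ?A. d i = \<nu>}. 1)" by (simp add: order)
    qed
    moreover have "\<dots> = (\<Sum>i\<in>?A. 1)" by (rule sum.group) auto
    ultimately show ?thesis by simp
  qed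
  let ?S = "{\<mu>. (\<exists>i<n. d i = \<mu>) \<and> 2 \<le> card {i. i < n \<and> d i \<le> \<mu>}}"
  have S: "second_smallest_eigenvalue M = Min ?S"
    unfolding second_smallest_eigenvalue_def by (simp only: count) (simp add: eigenvalue)
  have "(if i0 = 0 then 1 else 0) \<in> {..<n} - {i0}" using n by auto
  hence ne: "{..<n} - {i0} \<noteq> {}" by blast
  have "Min (d ` ({..<n} - {i0})) \<in> d ` ({..<n} - {i0})" by (rule Min_in) (use ne in auto)
  then obtain i1 where i1: "i1 < n" "i1 \<noteq> i0" "d i1 = Min (d ` ({..<n} - {i0}))" by force
  show ?thesis unfolding S
  proof (rule Min_eqI)
    show "finite ?S" by (rule finite_subset[of _ "d ` {..<n}"]) auto
  next
    fix \<mu> assume "\<mu> \<in> ?S"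
    hence two: "2 \<le> card {i. i < n \<and> d i \<le> \<mu>}" by simp
    have "\<not> {i. i < n \<and> d i \<le> \<mu>} \<subseteq> {i0}"
    proof
      assume "{i. i < n \<and> d i \<le> \<mu>} \<subseteq> {i0}"
      hence "card {i. i < n \<and> d i \<le> \<mu>} \<le> card {i0}" by (intro card_mono) auto
      thus False using two by simp
    qed
    then obtain i where "i < n" "d i \<le> \<mu>" "i \<noteq> i0" by auto
    moreover have "Min (d ` ({..<n} - {i0})) \<le> d i" by (rule Min_le) (use \<open>i < n\<close> \<open>i \<noteq> i0\<close> in auto)
    ultimately show "Min (d ` ({..<n} - {i0})) \<le> \<mu>" by linarith
  next
    have "{i0, i1} \<subseteq> {i. i < n \<and> d i \<le> d i1}" using i0 i1 min[of i1] by auto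
    hence "card {i0, i1} \<le> card {i. i < n \<and> d i \<le> d i1}" by (intro card_mono) auto
    hence "2 \<le> card {i. i < n \<and> d i \<le> d i1}" using i1(2) by simp
    thus "Min (d ` ({..<n} - {i0})) \<in> ?S" using i1 by auto
  qed
qed

section \<open>The graph Laplacian and the averaged swap operator\<close>

definition other_end :: "nat set \<Rightarrow> nat \<Rightarrow> nat" where
  "other_end e k = (if k \<in> e then the_elem (e - {k}) else k)"

definition laplacian_op :: "nat set set \<Rightarrow> (nat \<Rightarrow> real) \<Rightarrow> nat \<Rightarrow> real" where
  "laplacian_op E f k = (\<Sum>e\<in>{e\<in>E. k \<in> e}. f k - f (other_end e k))"

definition swap_avg :: "nat set set \<Rightarrow> (nat \<Rightarrow> real) \<Rightarrow> nat \<Rightarrow> real" where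
  "swap_avg E f k = (\<Sum>e\<in>E. f (other_end e k)) / real (card E)"

lemma swap_edge_eq: "swap_edge e Y k = Y (other_end e k)"
  unfolding swap_edge_def other_end_def by simp

lemma other_end_doubleton: "a \<noteq> b \<Longrightarrow> other_end {a, b} a = b \<and> other_end {a, b} b = a"
  unfolding other_end_def by (auto simp: insert_Diff_if)

lemma simple_graph_edgeE:
  assumes "simple_graph n E" "e \<in> E"
  obtains a b where "e = {a, b}" "a \<noteq> b" "a \<in> {1..n}" "b \<in> {1..n}"
proof -
  have "e \<subseteq> {1..n}" "card e = 2" using assms unfolding simple_graph_def by auto
  thus ?thesis using that by (metis card_2_iff insert_subset)
qed

lemma simple_graph_finite: "simple_graph n E \<Longrightarrow> finite E"
  unfolding simple_graph_def by (rule finite_subset[of _ "Pow {1..n}"]) auto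

lemma other_end_in_vertices:
  "simple_graph n E \<Longrightarrow> e \<in> E \<Longrightarrow> k \<in> {1..n} \<Longrightarrow> other_end e k \<in> {1..n}"
  by (erule simple_graph_edgeE) (auto simp: other_end_def insert_Diff_if)

lemma swap_avg_eq_laplacian_op:
  assumes "finite E" "E \<noteq> {}"
  shows "swap_avg E f k = f k - laplacian_op E f k / real (card E)"
proof -
  have "(\<Sum>e\<in>E. f (other_end e k)) = (\<Sum>e\<in>E. f k - (if k \<in> e then f k - f (other_end e k) else 0))"
    by (rule sum.cong) (auto simp: other_end_def)
  also have "\<dots> = real (card E) * f k - (\<Sum>e\<in>E. if k \<in> e then f k - f (other_end e k) else 0)"
    by (simp add: sum_subtractf)
  also have "(\<Sum>e\<in>E. if k \<in> e then f k - f (other_end e k) else 0) = laplacian_op E f k"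
    unfolding laplacian_op_def using assms(1) by (simp add: sum.inter_filter)
  finally show ?thesis unfolding swap_avg_def using assms by (simp add: field_simps)
qed

lemma swap_avg_cong:
  assumes "simple_graph n E" "\<And>w. w \<in> {1..n} \<Longrightarrow> f w = g w" "v \<in> {1..n}"
  shows "swap_avg E f v = swap_avg E g v"
  unfolding swap_avg_def using assms other_end_in_vertices[OF assms(1) _ assms(3)]
  by (auto intro!: sum.cong)

lemma swap_avg_sum: "swap_avg E (\<lambda>w. \<Sum>i\<in>I. c i * u i w) v = (\<Sum>i\<in>I. c i * swap_avg E (u i) v)"
  unfolding swap_avg_def sum_divide_distrib
  by (subst sum.swap) (simp add: sum_distrib_left)

lemma edge_sum_doubleton:
  fixes f g :: "nat \<Rightarrow> real"
  assumes "a \<noteq> b"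
  shows "(\<Sum>k\<in>{a, b}. f k * (g k - g (other_end {a, b} k))) = (f a - f b) * (g a - g b)"
  using assms other_end_doubleton[OF assms] by (simp add: algebra_simps)

lemma sum_mult_laplacian_op:
  assumes sg: "simple_graph n E"
  shows "(\<Sum>v\<in>{1..n}. f v * laplacian_op E g v)
       = (\<Sum>e\<in>E. \<Sum>k\<in>e. f k * (g k - g (other_end e k)))"
proof -
  have "(\<Sum>v\<in>{1..n}. f v * laplacian_op E g v)
      = (\<Sum>v\<in>{1..n}. \<Sum>e\<in>{e. e \<in> E \<and> v \<in> e}. f v * (g v - g (other_end e v)))"
    unfolding laplacian_op_def by (simp add: sum_distrib_left)
  also have "\<dots> = (\<Sum>e\<in>E. \<Sum>v\<in>{v. v \<in> {1..n} \<and> v \<in> e}. f v * (g v - g (other_end e v)))"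
    by (rule sum.swap_restrict) (use simple_graph_finite[OF sg] in auto)
  also have "\<dots> = (\<Sum>e\<in>E. \<Sum>k\<in>e. f k * (g k - g (other_end e k)))"
  proof (rule sum.cong[OF refl])
    fix e assume "e \<in> E"
    hence "{v. v \<in> {1..n} \<and> v \<in> e} = e" using sg unfolding simple_graph_def by blast
    thus "(\<Sum>v\<in>{v. v \<in> {1..n} \<and> v \<in> e}. f v * (g v - g (other_end e v)))
        = (\<Sum>k\<in>e. f k * (g k - g (other_end e k)))" by simp
  qed
  finally show ?thesis .
qed

lemma laplacian_row_sum_eq_laplacian_op:
  assumes sg: "simple_graph n E" and r: "r < n"
  shows "(\<Sum>j<n. laplacian n E $$ (r, j) * f (Suc j)) = laplacian_op E f (Suc r)"
proof -
  let ?k = "Suc r"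
  let ?N = "{j. j < n \<and> {?k, Suc j} \<in> E}"
  have no_loop: "{?k} \<notin> E" using sg unfolding simple_graph_def by fastforce
  have "(\<Sum>j<n. laplacian n E $$ (r, j) * f (Suc j))
      = (\<Sum>j<n. (if r = j then real (degree E ?k) * f ?k else 0)
                - (if {?k, Suc j} \<in> E then f (Suc j) else 0))"
    by (rule sum.cong) (use r no_loop in \<open>auto simp: laplacian_def\<close>)
  also have "\<dots> = real (degree E ?k) * f ?k - (\<Sum>j\<in>?N. f (Suc j))"
    using r by (simp add: sum_subtractf sum.inter_filter[symmetric] lessThan_def)
  also have "(\<Sum>j\<in>?N. f (Suc j)) = (\<Sum>e\<in>{e\<in>E. ?k \<in> e}. f (other_end e ?k))"
  proof (rule sum.reindex_bij_witness[where j = "\<lambda>j. {?k, Suc j}" and i = "\<lambda>e. other_end e ?k - 1"])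
    fix j assume j: "j \<in> ?N"
    hence "?k \<noteq> Suc j" using sg unfolding simple_graph_def by fastforce
    thus "other_end {?k, Suc j} ?k - 1 = j" "f (other_end {?k, Suc j} ?k) = f (Suc j)"
      using other_end_doubleton by auto
    show "{?k, Suc j} \<in> {e\<in>E. ?k \<in> e}" using j by auto
  next
    fix e assume e: "e \<in> {e\<in>E. ?k \<in> e}"
    then obtain a b where ab: "e = {a, b}" "a \<noteq> b" "a \<in> {1..n}" "b \<in> {1..n}"
      using simple_graph_edgeE[OF sg] by blast
    hence "e = {?k, other_end e ?k}" "other_end e ?k \<in> {1..n}"
      using e other_end_doubleton[OF ab(2)] by auto
    thus "{?k, Suc (other_end e ?k - 1)} = e" "other_end e ?k - 1 \<in> ?N"
      using e by auto
  qed
  also have "real (degree E ?k) * f ?k - (\<Sum>e\<in>{e\<in>E. ?k \<in> e}. f (other_end e ?k))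
      = laplacian_op E f ?k"
    unfolding laplacian_op_def degree_def using simple_graph_finite[OF sg] by (simp add: sum_subtractf)
  finally show ?thesis .
qed

lemma edge_energy_nonneg:
  fixes f :: "nat \<Rightarrow> real"
  assumes "simple_graph n E" "e \<in> E"
  shows "0 \<le> (\<Sum>k\<in>e. f k * (f k - f (other_end e k)))"
proof -
  obtain a b where ab: "e = {a, b}" "a \<noteq> b" using simple_graph_edgeE[OF assms] by metis
  show ?thesis unfolding ab(1) edge_sum_doubleton[OF ab(2)] by simp
qed

lemma not_bipartite_three_le:
  assumes "simple_graph n E" "\<not> bipartite n E"
  shows "3 \<le> n"
proof (rule ccontr)
  assume "\<not> 3 \<le> n"
  have "bipartite n E" unfolding bipartite_def
  proof (intro exI[of _ "{1} \<inter> {1..n}"] conjI ballI)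
    fix e assume "e \<in> E"
    then obtain a b where "e = {a, b}" "a \<noteq> b" "a \<in> {1..n}" "b \<in> {1..n}"
      using simple_graph_edgeE[OF assms(1)] by metis
    hence "e = {1, 2}" using \<open>\<not> 3 \<le> n\<close> by auto
    thus "card (e \<inter> ({1} \<inter> {1..n})) = 1" using \<open>a \<in> {1..n}\<close> by auto
  qed auto
  thus False using assms(2) by simp
qed

section \<open>Expectations under GoRank\<close>

lemma gorank_finite_support:
  assumes "finite E" "E \<noteq> {}"
  shows "finite (set_pmf (gorank E X s))"
proof (induction s)
  case (Suc s)
  show ?case unfolding gorank.simps set_bind_pmf
    by (rule finite_UN_I[OF Suc]) (use assms in \<open>auto split: prod.splits\<close>)
qed simp

lemma expectation_bind_pmf_finite:
  fixes h :: "'b \<Rightarrow> real"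
  assumes "finite (set_pmf p)" "\<And>x. x \<in> set_pmf p \<Longrightarrow> finite (set_pmf (f x))"
  shows "measure_pmf.expectation (bind_pmf p f) h
       = measure_pmf.expectation p (\<lambda>x. measure_pmf.expectation (f x) h)"
proof -
  have "measure_pmf.expectation (bind_pmf p f) h
      = (\<Sum>a\<in>set_pmf p. pmf p a *\<^sub>R measure_pmf.expectation (f a) h)"
    by (rule pmf_expectation_bind) (use assms in auto)
  also have "\<dots> = measure_pmf.expectation p (\<lambda>x. measure_pmf.expectation (f x) h)"
    by (rule integral_measure_pmf[symmetric]) (use assms in auto)
  finally show ?thesis .
qed

lemma expectation_gorank_step:
  assumes "finite E" "E \<noteq> {}"
  shows "measure_pmf.expectation (gorank E X (Suc s)) h
       = measure_pmf.expectation (gorank E X s)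
           (\<lambda>(Y, R'). (\<Sum>e\<in>E. h (swap_edge e Y,
                 \<lambda>k. (1 - 1 / real (Suc s)) * R' k + (1 / real (Suc s)) * (if X k > Y k then 1 else 0)))
              / real (card E))"
  unfolding gorank.simps
  by (subst expectation_bind_pmf_finite[OF gorank_finite_support[OF assms]])
    (use assms in \<open>auto split: prod.splits simp: integral_pmf_of_set[OF assms(2,1)]
                     intro!: Bochner_Integration.integral_cong\<close>)

lemma expectation_gorank_node:
  assumes "finite E" "E \<noteq> {}"
  shows "measure_pmf.expectation (gorank E X s) (\<lambda>(Y, R'). g (Y k))
       = (swap_avg E ^^ s) (\<lambda>v. g (X v)) k"
proof (induction s arbitrary: k)
  case (Suc s)
  let ?p = "gorank E X s"
  have int: "integrable (measure_pmf ?p) h" for h :: "_ \<Rightarrow> real"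
    by (rule integrable_measure_pmf_finite[OF gorank_finite_support[OF assms]])
  have "measure_pmf.expectation (gorank E X (Suc s)) (\<lambda>(Y, R'). g (Y k))
      = measure_pmf.expectation ?p (\<lambda>x. (\<Sum>e\<in>E. g (fst x (other_end e k))) / real (card E))"
    unfolding expectation_gorank_step[OF assms] by (simp add: swap_edge_eq case_prod_beta')
  also have "\<dots> = (\<Sum>e\<in>E. measure_pmf.expectation ?p (\<lambda>(Y, R'). g (Y (other_end e k)))) / real (card E)"
    by (simp add: Bochner_Integration.integral_sum[OF int] case_prod_beta')
  also have "\<dots> = (swap_avg E ^^ Suc s) (\<lambda>v. g (X v)) k"
    by (simp add: Suc.IH swap_avg_def[where f = "(swap_avg E ^^ s) (\<lambda>v. g (X v))"])
  finally show ?case .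
qed simp

lemma expectation_gorank_running_avg:
  assumes "finite E" "E \<noteq> {}"
  shows "real s * measure_pmf.expectation (gorank E X s) (\<lambda>(Y, R'). R' k)
       = (\<Sum>j<s. measure_pmf.expectation (gorank E X j) (\<lambda>(Y, R'). if X k > Y k then 1 else 0))"
proof (induction s)
  case (Suc s)
  let ?p = "gorank E X s"
  let ?I = "\<lambda>(Y::nat \<Rightarrow> real, R'::nat \<Rightarrow> real). if X k > Y k then 1 else (0::real)"
  have int: "integrable (measure_pmf ?p) h" for h :: "_ \<Rightarrow> real"
    by (rule integrable_measure_pmf_finite[OF gorank_finite_support[OF assms]])
  have "measure_pmf.expectation (gorank E X (Suc s)) (\<lambda>(Y, R'). R' k)
      = measure_pmf.expectation ?p (\<lambda>x. (1 - 1 / real (Suc s)) * snd x k + (1 / real (Suc s)) * ?I x)"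
    unfolding expectation_gorank_step[OF assms] using assms by (simp add: case_prod_beta')
  also have "\<dots> = (1 - 1 / real (Suc s)) * measure_pmf.expectation ?p (\<lambda>(Y, R'). R' k)
                 + (1 / real (Suc s)) * measure_pmf.expectation ?p ?I"
    using int by (simp add: case_prod_beta')
  finally have step: "measure_pmf.expectation (gorank E X (Suc s)) (\<lambda>(Y, R'). R' k) = \<dots>" .
  have "real (Suc s) * (1 - 1 / real (Suc s)) = real s" "real (Suc s) * (1 / real (Suc s)) = 1"
    by (simp_all add: field_simps)
  hence "real (Suc s) * measure_pmf.expectation (gorank E X (Suc s)) (\<lambda>(Y, R'). R' k)
      = real s * measure_pmf.expectation ?p (\<lambda>(Y, R'). R' k) + measure_pmf.expectation ?p ?I"
    unfolding step distrib_left mult.assoc[symmetric] by simp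
  thus ?case using Suc.IH by simp
qed simp

lemma expected_rank_eq_swap_avg_sum:
  assumes "finite E" "E \<noteq> {}" "t \<ge> 1"
  shows "expected_rank n E X k t
       = real n / real t * (\<Sum>j<t. (swap_avg E ^^ j) (\<lambda>v. if X k > X v then 1 else 0) k) + 1"
proof -
  let ?p = "gorank E X t"
  have int: "integrable (measure_pmf ?p) h" for h :: "_ \<Rightarrow> real"
    by (rule integrable_measure_pmf_finite[OF gorank_finite_support[OF assms(1,2)]])
  have "expected_rank n E X k t = real n * measure_pmf.expectation ?p (\<lambda>(Y, R'). R' k) + 1"
    unfolding expected_rank_def using int by (simp add: case_prod_beta')
  also have "real t * measure_pmf.expectation ?p (\<lambda>(Y, R'). R' k)
      = (\<Sum>j<t. (swap_avg E ^^ j) (\<lambda>v. if X k > X v then 1 else 0) k)"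
    unfolding expectation_gorank_running_avg[OF assms(1,2)]
    by (rule sum.cong[OF refl]) (rule expectation_gorank_node[OF assms(1,2)])
  hence "measure_pmf.expectation ?p (\<lambda>(Y, R'). R' k)
      = (\<Sum>j<t. (swap_avg E ^^ j) (\<lambda>v. if X k > X v then 1 else 0) k) / real t"
    using assms(3) by (simp add: field_simps)
  finally show ?thesis by simp
qed

section \<open>An orthonormal eigenbasis of the Laplacian\<close>

locale laplacian_eigenbasis =
  fixes n :: nat and E :: "nat set set" and u :: "nat \<Rightarrow> nat \<Rightarrow> real" and d :: "nat \<Rightarrow> real"
  assumes simple: "simple_graph n E"
    and orthonormal: "\<And>i j. i < n \<Longrightarrow> j < n \<Longrightarrow>
                        (\<Sum>v\<in>{1..n}. u i v * u j v) = (if i = j then 1 else 0)"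
    and complete: "\<And>v w. v \<in> {1..n} \<Longrightarrow> w \<in> {1..n} \<Longrightarrow>
                     (\<Sum>i<n. u i v * u i w) = (if v = w then 1 else 0)"
    and eigen: "\<And>i v. i < n \<Longrightarrow> v \<in> {1..n} \<Longrightarrow> laplacian_op E (u i) v = d i * u i v"
begin

lemma eigenvalue_eq_energy:
  assumes i: "i < n"
  shows "d i = (\<Sum>e\<in>E. \<Sum>k\<in>e. u i k * (u i k - u i (other_end e k)))"
proof -
  have "d i = d i * (\<Sum>v\<in>{1..n}. u i v * u i v)" using orthonormal[OF i i] by simp
  also have "\<dots> = (\<Sum>v\<in>{1..n}. u i v * (d i * u i v))"
    by (simp add: sum_distrib_left mult.left_commute)
  also have "\<dots> = (\<Sum>v\<in>{1..n}. u i v * laplacian_op E (u i) v)"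
    by (rule sum.cong) (use eigen[OF i] in auto)
  finally show ?thesis unfolding sum_mult_laplacian_op[OF simple] .
qed

lemma eigenvalue_nonneg: "i < n \<Longrightarrow> 0 \<le> d i"
  by (simp add: eigenvalue_eq_energy sum_nonneg edge_energy_nonneg[OF simple])

lemma sum_eigenvalues: "(\<Sum>i<n. d i) = 2 * real (card E)"
proof -
  have "(\<Sum>i<n. d i) = (\<Sum>i<n. \<Sum>e\<in>E. \<Sum>k\<in>e. u i k * (u i k - u i (other_end e k)))"
    by (simp add: eigenvalue_eq_energy)
  also have "\<dots> = (\<Sum>e\<in>E. \<Sum>i<n. \<Sum>k\<in>e. u i k * (u i k - u i (other_end e k)))"
    by (rule sum.swap)
  also have "\<dots> = (\<Sum>e\<in>E. 2)"
  proof (rule sum.cong[OF refl])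
    fix e assume "e \<in> E"
    then obtain a b where ab: "e = {a, b}" "a \<noteq> b" "a \<in> {1..n}" "b \<in> {1..n}"
      using simple_graph_edgeE[OF simple] by metis
    have "(\<Sum>i<n. \<Sum>k\<in>e. u i k * (u i k - u i (other_end e k)))
        = (\<Sum>i<n. u i a * u i a) - 2 * (\<Sum>i<n. u i a * u i b) + (\<Sum>i<n. u i b * u i b)"
      unfolding ab(1) edge_sum_doubleton[OF ab(2)]
      by (simp add: algebra_simps sum.distrib sum_subtractf sum_distrib_left)
    thus "(\<Sum>i<n. \<Sum>k\<in>e. u i k * (u i k - u i (other_end e k))) = 2"
      using complete ab by simp
  qed
  finally show ?thesis by simp
qed

lemma eigenvalue_le_twice_card: "i < n \<Longrightarrow> d i \<le> 2 * real (card E)"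
  using member_le_sum[of i "{..<n}" d] eigenvalue_nonneg by (simp add: sum_eigenvalues)

definition eig_coeff :: "(nat \<Rightarrow> real) \<Rightarrow> nat \<Rightarrow> real" where
  "eig_coeff a i = (\<Sum>w\<in>{1..n}. u i w * a w)"

lemma eig_expansion:
  assumes v: "v \<in> {1..n}"
  shows "a v = (\<Sum>i<n. eig_coeff a i * u i v)"
proof -
  have "(\<Sum>i<n. eig_coeff a i * u i v) = (\<Sum>w\<in>{1..n}. a w * (\<Sum>i<n. u i w * u i v))"
    unfolding eig_coeff_def sum_distrib_right sum_distrib_left
    by (subst sum.swap) (simp add: mult_ac)
  also have "\<dots> = a v" using v by (simp add: complete if_distrib cong: if_cong)
  finally show ?thesis by simp
qed

lemma parseval: "(\<Sum>i<n. eig_coeff a i ^ 2) = (\<Sum>w\<in>{1..n}. a w ^ 2)"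
proof -
  have sq: "eig_coeff a i ^ 2 = (\<Sum>v\<in>{1..n}. \<Sum>w\<in>{1..n}. a v * a w * (u i v * u i w))" for i
    unfolding eig_coeff_def power2_eq_square sum_product by (intro sum.cong refl) (simp add: mult_ac)
  have "(\<Sum>i<n. eig_coeff a i ^ 2) = (\<Sum>v\<in>{1..n}. \<Sum>w\<in>{1..n}. \<Sum>i<n. a v * a w * (u i v * u i w))"
    unfolding sq by (subst sum.swap, rule sum.cong[OF refl], rule sum.swap)
  also have "\<dots> = (\<Sum>v\<in>{1..n}. \<Sum>w\<in>{1..n}. a v * a w * (if v = w then 1 else 0))"
    by (intro sum.cong refl) (simp add: complete flip: sum_distrib_left)
  also have "\<dots> = (\<Sum>w\<in>{1..n}. a w ^ 2)"
    by (simp add: if_distrib power2_eq_square cong: if_cong)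
  finally show ?thesis .
qed

lemma exists_zero_eigenvalue:
  assumes "0 < n"
  shows "\<exists>i<n. d i = 0"
proof -
  have "(\<Sum>i<n. eig_coeff (\<lambda>_. 1) i ^ 2) \<noteq> 0" using parseval[of "\<lambda>_. 1"] assms by simp
  from sum.not_neutral_contains_not_neutral[OF this]
  obtain i where i: "i < n" and coeff_ne: "eig_coeff (\<lambda>_. 1) i \<noteq> 0" by auto
  txt \<open>Constants are in the kernel of the Laplacian, so \<open>d i \<langle>u i, 1\<rangle> = \<langle>L u i, 1\<rangle> = 0\<close>.\<close>
  have "d i * eig_coeff (\<lambda>_. 1) i = (\<Sum>v\<in>{1..n}. 1 * laplacian_op E (u i) v)"
    unfolding eig_coeff_def by (simp add: sum_distrib_left eigen[OF i])
  also have "\<dots> = 0"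
    unfolding sum_mult_laplacian_op[OF simple]
  proof (rule sum.neutral, rule ballI)
    fix e assume "e \<in> E"
    then obtain a b where "e = {a, b}" "a \<noteq> b" by (elim simple_graph_edgeE[OF simple])
    thus "(\<Sum>k\<in>e. 1 * (u i k - u i (other_end e k))) = 0"
      using edge_sum_doubleton[of a b "\<lambda>_. 1"] by simp
  qed
  finally show ?thesis using i coeff_ne by auto
qed

lemma swap_avg_eigen:
  assumes "E \<noteq> {}" "i < n" "v \<in> {1..n}"
  shows "swap_avg E (u i) v = (1 - d i / real (card E)) * u i v"
  unfolding swap_avg_eq_laplacian_op[OF simple_graph_finite[OF simple] assms(1)] eigen[OF assms(2,3)]
  by (simp add: algebra_simps)

lemma swap_avg_iterate:
  assumes "E \<noteq> {}" "v \<in> {1..n}"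
  shows "(swap_avg E ^^ j) a v = (\<Sum>i<n. eig_coeff a i * (1 - d i / real (card E)) ^ j * u i v)"
  using assms(2)
proof (induction j arbitrary: v)
  case 0
  then show ?case using eig_expansion by simp
next
  case (Suc j)
  have "(swap_avg E ^^ Suc j) a v
      = swap_avg E (\<lambda>w. \<Sum>i<n. (eig_coeff a i * (1 - d i / real (card E)) ^ j) * u i w) v"
    unfolding funpow.simps o_apply by (rule swap_avg_cong[OF simple Suc.IH Suc.prems])
  also have "\<dots> = (\<Sum>i<n. eig_coeff a i * (1 - d i / real (card E)) ^ Suc j * u i v)"
    unfolding swap_avg_sum using Suc.prems assms(1) by (intro sum.cong refl) (simp add: swap_avg_eigen)
  finally show ?case .
qed

lemma sum_swap_avg_iterates:
  assumes "E \<noteq> {}" "v \<in> {1..n}"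
  shows "(\<Sum>j<t. (swap_avg E ^^ j) a v)
       = (\<Sum>i<n. eig_coeff a i * (\<Sum>j<t. (1 - d i / real (card E)) ^ j) * u i v)"
  unfolding swap_avg_iterate[OF assms] sum_distrib_left sum_distrib_right
  by (subst sum.swap) simp

end

lemma laplacian_eigenbasis_exists:
  assumes "simple_graph n E"
  obtains u d where "laplacian_eigenbasis n E u d"
    and "char_poly (laplacian n E) = (\<Prod>a\<leftarrow>map d [0..<n]. [:- a, 1:])"
proof -
  let ?L = "laplacian n E"
  have L: "?L \<in> carrier_mat n n" unfolding laplacian_def by simp
  have "transpose_mat ?L = ?L" by (rule eq_matI) (auto simp: laplacian_def insert_commute)
  then obtain U d where U: "U \<in> carrier_mat n n" and UtU: "transpose_mat U * U = 1\<^sub>m n"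
    and L_eq: "?L = U * mat_diag n d * transpose_mat U"
    using real_symmetric_orthogonal_diagonalization[OF L] by blast
  have Ut: "transpose_mat U \<in> carrier_mat n n" using U by simp
  have UUt: "U * transpose_mat U = 1\<^sub>m n"
    by (rule mat_mult_left_right_inverse[OF _ U UtU]) (use U in simp)
  have LU: "?L * U = U * mat_diag n d"
  proof -
    have "?L * U = U * mat_diag n d * (transpose_mat U * U)"
      unfolding L_eq using U Ut by (simp add: assoc_mult_mat[of _ n n _ n _ n] mult_carrier_mat[of _ n n _ n])
    thus ?thesis unfolding UtU using U by (simp add: right_mult_one_mat[of _ n n])
  qed
  define u where "u i v = U $$ (v - 1, i)" for i v
  have vertex_sum: "(\<Sum>v\<in>{1..n}. f v) = (\<Sum>r<n. f (Suc r))" for f :: "nat \<Rightarrow> real"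
    using sum.atLeast1_atMost_eq[of f n] by simp
  have "laplacian_eigenbasis n E u d"
  proof
    fix i j assume "i < n" "j < n"
    thus "(\<Sum>v\<in>{1..n}. u i v * u j v) = (if i = j then 1 else 0)"
      unfolding vertex_sum u_def using arg_cong[OF UtU, of "\<lambda>M. M $$ (i, j)"] U
      by (simp add: scalar_prod_def atLeast0LessThan)
  next
    fix v w assume "v \<in> {1..n}" "w \<in> {1..n}"
    thus "(\<Sum>i<n. u i v * u i w) = (if v = w then 1 else 0)"
      unfolding u_def using arg_cong[OF UUt, of "\<lambda>M. M $$ (v - 1, w - 1)"] U
      by (auto simp: scalar_prod_def atLeast0LessThan)
  next
    fix i v assume i: "i < n" and v: "v \<in> {1..n}"
    then obtain r where r: "r < n" "v = Suc r" by (cases v) auto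
    have "laplacian_op E (u i) v = (\<Sum>j<n. ?L $$ (r, j) * U $$ (j, i))"
      unfolding r(2) laplacian_row_sum_eq_laplacian_op[OF assms r(1), symmetric] u_def by simp
    also have "\<dots> = (U * mat_diag n d) $$ (r, i)"
      unfolding LU[symmetric] using L U r i by (simp add: scalar_prod_def atLeast0LessThan)
    also have "\<dots> = d i * u i v" unfolding u_def r(2) using U r i by (simp add: mat_diag_mult_right)
    finally show "laplacian_op E (u i) v = d i * u i v" .
  qed (rule assms)
  moreover have "char_poly ?L = (\<Prod>a\<leftarrow>map d [0..<n]. [:- a, 1:])"
  proof -
    have "similar_mat_wit ?L (mat_diag n d) U (transpose_mat U)"
      unfolding similar_mat_wit_def Let_def using L U Ut UtU UUt L_eq by auto
    hence "char_poly ?L = char_poly (mat_diag n d)"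
      by (intro char_poly_similar) (auto simp: similar_mat_def)
    also have "\<dots> = (\<Prod>a\<leftarrow>diag_mat (mat_diag n d). [:- a, 1:])"
      by (rule char_poly_upper_triangular) (auto simp: upper_triangular_def mat_diag_def)
    also have "diag_mat (mat_diag n d) = map d [0..<n]"
      unfolding diag_mat_def mat_diag_def by simp
    finally show ?thesis .
  qed
  ultimately show ?thesis using that by blast
qed

lemma (in laplacian_eigenbasis) spectral_gap_le_card:
  assumes "3 \<le> n" "i0 < n" "\<And>i. i < n \<Longrightarrow> i \<noteq> i0 \<Longrightarrow> lam \<le> d i"
  shows "lam \<le> real (card E)"
proof -
  define a where "a = (if i0 = 0 then 1 else (0::nat))"
  define b where "b = (if i0 = 2 then 1 else (2::nat))"
  have ab: "a < n" "b < n" "a \<noteq> i0" "b \<noteq> i0" "a \<noteq> b" unfolding a_def b_def using assms by auto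
  have "d a + d b = (\<Sum>i\<in>{a, b}. d i)" using ab by simp
  also have "\<dots> \<le> (\<Sum>i<n. d i)" by (rule sum_mono2) (use ab eigenvalue_nonneg in auto)
  finally show ?thesis using assms(3)[of a] assms(3)[of b] ab sum_eigenvalues by simp
qed

locale connected_laplacian_eigenbasis = laplacian_eigenbasis +
  assumes connected: "connected_graph n E" and two_le_n: "2 \<le> n"
begin

lemma edges_nonempty: "E \<noteq> {}"
proof -
  have "(1, 2) \<in> (adj E)\<^sup>*" using connected two_le_n unfolding connected_graph_def by auto
  then obtain y where "(1, y) \<in> adj E" by (cases rule: converse_rtranclE) auto
  thus ?thesis unfolding adj_def by auto
qed

lemma card_edges_pos: "0 < real (card E)"
  using edges_nonempty simple_graph_finite[OF simple] by (simp add: card_gt_0_iff)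

lemma zero_eigenvector_const:
  assumes i: "i < n" and d0: "d i = 0"
  obtains c where "\<And>v. v \<in> {1..n} \<Longrightarrow> u i v = c"
proof -
  have "(\<Sum>e\<in>E. \<Sum>k\<in>e. u i k * (u i k - u i (other_end e k))) = 0"
    using eigenvalue_eq_energy[OF i] d0 by simp
  hence energy0: "\<forall>e\<in>E. (\<Sum>k\<in>e. u i k * (u i k - u i (other_end e k))) = 0"
    by (subst (asm) sum_nonneg_eq_0_iff[OF simple_graph_finite[OF simple]])
      (simp_all add: edge_energy_nonneg[OF simple])
  have edge_eq: "u i x = u i y" if xy: "{x, y} \<in> E" for x y
  proof -
    obtain a b where ab: "{x, y} = {a, b}" "a \<noteq> b" using simple_graph_edgeE[OF simple xy] by metis
    have "(u i a - u i b) * (u i a - u i b) = 0"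
      using energy0[rule_format, OF xy] unfolding ab(1) edge_sum_doubleton[OF ab(2)] .
    thus ?thesis using ab(1) by (auto simp: doubleton_eq_iff)
  qed
  have "u i v = u i 1" if v: "v \<in> {1..n}" for v
  proof -
    have "(1, v) \<in> (adj E)\<^sup>*" using connected v two_le_n unfolding connected_graph_def by auto
    thus ?thesis
    proof (induction rule: rtrancl_induct)
      case (step y z)
      thus ?case using edge_eq[of y z] unfolding adj_def by simp
    qed simp
  qed
  thus ?thesis using that by blast
qed

lemma zero_eigenvector_sum:
  assumes "i < n" "d i = 0" "v \<in> {1..n}"
  shows "(\<Sum>w\<in>{1..n}. u i w * f w) = u i v * (\<Sum>w\<in>{1..n}. f w)"
proof -
  obtain c where c: "\<And>v. v \<in> {1..n} \<Longrightarrow> u i v = c"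
    using zero_eigenvector_const[OF assms(1,2)] by blast
  have "(\<Sum>w\<in>{1..n}. u i w * f w) = (\<Sum>w\<in>{1..n}. c * f w)" by (intro sum.cong refl) (simp add: c)
  thus ?thesis using c[OF assms(3)] by (simp add: sum_distrib_left)
qed

lemma zero_eigenvector_sq:
  assumes "i < n" "d i = 0" "v \<in> {1..n}"
  shows "real n * u i v ^ 2 = 1"
proof -
  obtain c where c: "\<And>v. v \<in> {1..n} \<Longrightarrow> u i v = c"
    using zero_eigenvector_const[OF assms(1,2)] by blast
  have "(\<Sum>w\<in>{1..n}. u i w * u i w) = (\<Sum>w\<in>{1..n}. c * c)" by (intro sum.cong refl) (simp add: c)
  thus ?thesis using orthonormal[OF assms(1) assms(1)] c[OF assms(3)] by (simp add: power2_eq_square)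
qed

lemma zero_eigenvalue_unique:
  assumes i: "i < n" "d i = 0" and j: "j < n" "d j = 0"
  shows "i = j"
proof (rule ccontr)
  assume "i \<noteq> j"
  have v: "1 \<in> {1..n}" using two_le_n by simp
  obtain c where c: "\<And>v. v \<in> {1..n} \<Longrightarrow> u j v = c"
    using zero_eigenvector_const[OF j] by blast
  have "0 = (\<Sum>w\<in>{1..n}. u i w * u j w)" using orthonormal[OF i(1) j(1)] \<open>i \<noteq> j\<close> by simp
  also have "\<dots> = u i 1 * (\<Sum>w\<in>{1..n}. u j w)" by (rule zero_eigenvector_sum[OF i v])
  also have "\<dots> = real n * (u i 1 * u j 1)" using c[OF v] by (simp add: c)
  finally have "u i 1 = 0 \<or> u j 1 = 0" using two_le_n by simp
  thus False using zero_eigenvector_sq[OF i v] zero_eigenvector_sq[OF j v] by auto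
qed

lemma zero_eigenvalue_simple:
  obtains i0 where "i0 < n" "d i0 = 0" "\<And>i. i < n \<Longrightarrow> i \<noteq> i0 \<Longrightarrow> 0 < d i"
proof -
  obtain i0 where "i0 < n" "d i0 = 0" using exists_zero_eigenvalue two_le_n by auto
  moreover have "0 < d i" if "i < n" "i \<noteq> i0" for i
  proof -
    have "d i \<noteq> 0" using zero_eigenvalue_unique[OF calculation that(1)] that(2) by blast
    thus ?thesis using eigenvalue_nonneg[OF that(1)] by simp
  qed
  ultimately show ?thesis using that by blast
qed

end

section \<open>The convergence rate\<close>

lemma abs_geometric_sum_le:
  fixes x a :: real
  assumes a: "0 < a" "a \<le> 1" and x: "a \<le> x" "x \<le> 2"
  shows "\<bar>\<Sum>j<t. (1 - x) ^ j\<bar> \<le> 1 / a"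
proof -
  define r where "r = 1 - x"
  have x_pos: "0 < x" using a x by simp
  have sum_eq: "(\<Sum>j<t. r ^ j) = (1 - r ^ t) / x"
    using geometric_sum[of r t] x_pos unfolding r_def by (simp add: field_simps)
  have r_le: "\<bar>r\<bar> \<le> 1" using a x unfolding r_def by simp
  hence "\<bar>r ^ t\<bar> \<le> 1" by (simp add: power_abs power_le_one)
  hence "r ^ t \<le> 1" by (simp add: abs_le_iff)
  hence lower: "0 \<le> (1 - r ^ t) / x" using x_pos by simp
  have upper: "(1 - r ^ t) / x \<le> 1 / a"
  proof (cases "x \<le> 1")
    case True
    hence "0 \<le> r ^ t" unfolding r_def by simp
    hence "(1 - r ^ t) / x \<le> 1 / x" using x_pos by (simp add: divide_right_mono)
    also have "\<dots> \<le> 1 / a" using a x by (simp add: frac_le)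
    finally show ?thesis .
  next
    case False
    have "- (r ^ t) \<le> \<bar>r\<bar>"
    proof (cases t)
      case (Suc s)
      have "\<bar>r ^ t\<bar> = \<bar>r\<bar> * \<bar>r\<bar> ^ s" by (simp add: Suc abs_mult power_abs)
      also have "\<dots> \<le> \<bar>r\<bar>" using r_le by (simp add: mult_left_le power_le_one)
      finally show ?thesis by linarith
    qed simp
    hence "(1 - r ^ t) / x \<le> 1" using False x_pos unfolding r_def by simp
    also have "1 \<le> 1 / a" using a by simp
    finally show ?thesis .
  qed
  show ?thesis unfolding r_def[symmetric] sum_eq using lower upper by simp
qed

lemma abs_sum_bounded_mult_le:
  fixes c g y :: "'a \<Rightarrow> real"
  assumes g: "\<And>i. i \<in> I \<Longrightarrow> \<bar>g i\<bar> \<le> B"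
  shows "\<bar>\<Sum>i\<in>I. c i * g i * y i\<bar> \<le> B * L2_set c I * L2_set y I"
proof (cases "I = {}")
  case False
  then have B: "0 \<le> B" using g by force
  have "(c i * g i)\<^sup>2 \<le> (B * c i)\<^sup>2" if "i \<in> I" for i
  proof -
    have "(g i)\<^sup>2 \<le> B\<^sup>2" using abs_le_square_iff[of "g i" B] g[OF that] B by simp
    from mult_left_mono[OF this, of "(c i)\<^sup>2"] show ?thesis by (simp add: power_mult_distrib mult.commute)
  qed
  hence "L2_set (\<lambda>i. c i * g i) I \<le> L2_set (\<lambda>i. B * c i) I"
    unfolding L2_set_def by (intro real_sqrt_le_mono sum_mono)
  also have "\<dots> = B * L2_set c I" using B by (simp add: L2_set_right_distrib)
  finally have cg: "L2_set (\<lambda>i. c i * g i) I \<le> B * L2_set c I" .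
  have "\<bar>\<Sum>i\<in>I. c i * g i * y i\<bar> \<le> (\<Sum>i\<in>I. \<bar>c i * g i\<bar> * \<bar>y i\<bar>)"
    using sum_abs[of "\<lambda>i. c i * g i * y i" I] by (simp add: abs_mult)
  also have "\<dots> \<le> L2_set (\<lambda>i. c i * g i) I * L2_set y I" by (rule L2_set_mult_ineq)
  also have "\<dots> \<le> B * L2_set c I * L2_set y I" by (rule mult_right_mono[OF cg]) simp
  finally show ?thesis .
qed simp

context connected_laplacian_eigenbasis
begin

lemma parseval_nonzero_modes:
  assumes i0: "i0 < n" "d i0 = 0"
  shows "(\<Sum>i\<in>{..<n} - {i0}. eig_coeff a i ^ 2)
       = (\<Sum>w\<in>{1..n}. a w ^ 2) - (\<Sum>w\<in>{1..n}. a w)\<^sup>2 / real n"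
proof -
  have v: "1 \<in> {1..n}" using two_le_n by simp
  have "eig_coeff a i0 ^ 2 = (u i0 1)\<^sup>2 * (\<Sum>w\<in>{1..n}. a w)\<^sup>2"
    unfolding eig_coeff_def zero_eigenvector_sum[OF i0 v] by (simp add: power_mult_distrib)
  also have "\<dots> = (\<Sum>w\<in>{1..n}. a w)\<^sup>2 / real n"
    using zero_eigenvector_sq[OF i0 v] two_le_n by (simp add: field_simps)
  finally have "eig_coeff a i0 ^ 2 = (\<Sum>w\<in>{1..n}. a w)\<^sup>2 / real n" .
  moreover have "(\<Sum>i<n. eig_coeff a i ^ 2) = eig_coeff a i0 ^ 2 + (\<Sum>i\<in>{..<n} - {i0}. eig_coeff a i ^ 2)"
    by (rule sum.remove) (use i0 in auto)
  ultimately show ?thesis unfolding parseval by simp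
qed

lemma swap_avg_sum_deviation:
  assumes i0: "i0 < n" "d i0 = 0"
    and lam: "0 < lam" "lam \<le> real (card E)" "\<And>i. i < n \<Longrightarrow> i \<noteq> i0 \<Longrightarrow> lam \<le> d i"
    and k: "k \<in> {1..n}"
  shows "\<bar>(\<Sum>j<t. (swap_avg E ^^ j) a k) - real t * (\<Sum>w\<in>{1..n}. a w) / real n\<bar>
         \<le> real (card E) / lam * sqrt ((\<Sum>w\<in>{1..n}. a w ^ 2) - (\<Sum>w\<in>{1..n}. a w)\<^sup>2 / real n)"
proof -
  define G where "G i = (\<Sum>j<t. (1 - d i / real (card E)) ^ j)" for i
  define I where "I = {..<n} - {i0}"
  have "(\<Sum>j<t. (swap_avg E ^^ j) a k)
      = eig_coeff a i0 * G i0 * u i0 k + (\<Sum>i\<in>I. eig_coeff a i * G i * u i k)"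
    unfolding sum_swap_avg_iterates[OF edges_nonempty k] G_def I_def
    by (rule sum.remove) (use i0 in auto)
  also have "eig_coeff a i0 * G i0 * u i0 k = real t * (\<Sum>w\<in>{1..n}. a w) / real n"
    using zero_eigenvector_sq[OF i0 k] two_le_n i0(2) unfolding G_def eig_coeff_def zero_eigenvector_sum[OF i0 k]
    by (simp add: field_simps power2_eq_square)
  finally have split: "(\<Sum>j<t. (swap_avg E ^^ j) a k) - real t * (\<Sum>w\<in>{1..n}. a w) / real n
      = (\<Sum>i\<in>I. eig_coeff a i * G i * u i k)" by simp
  have G_bound: "\<bar>G i\<bar> \<le> real (card E) / lam" if "i \<in> I" for i
  proof -
    have "\<bar>G i\<bar> \<le> 1 / (lam / real (card E))" unfolding G_def
    proof (rule abs_geometric_sum_le)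
      show "0 < lam / real (card E)" "lam / real (card E) \<le> 1"
        using lam card_edges_pos by simp_all
      show "lam / real (card E) \<le> d i / real (card E)"
        using lam(3) that card_edges_pos unfolding I_def by (simp add: divide_right_mono)
      show "d i / real (card E) \<le> 2"
        using eigenvalue_le_twice_card that card_edges_pos unfolding I_def by (simp add: field_simps)
    qed
    thus ?thesis by simp
  qed
  have "(\<Sum>i\<in>I. u i k ^ 2) \<le> (\<Sum>i<n. u i k ^ 2)" unfolding I_def by (rule sum_mono2) auto
  also have "\<dots> = 1" using complete[OF k k] by (simp add: power2_eq_square)
  finally have u_L2: "L2_set (\<lambda>i. u i k) I \<le> 1" unfolding L2_set_def by simp
  have "\<bar>\<Sum>i\<in>I. eig_coeff a i * G i * u i k\<bar>
      \<le> real (card E) / lam * L2_set (eig_coeff a) I * L2_set (\<lambda>i. u i k) I"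
    by (rule abs_sum_bounded_mult_le[OF G_bound])
  also have "\<dots> \<le> real (card E) / lam * L2_set (eig_coeff a) I * 1"
    by (rule mult_left_mono[OF u_L2]) (use lam(1) in simp)
  finally show ?thesis unfolding split L2_set_def I_def parseval_nonzero_modes[OF i0] by simp
qed

lemma second_smallest_laplacian_eigenvalue:
  assumes cp: "char_poly (laplacian n E) = (\<Prod>a\<leftarrow>map d [0..<n]. [:- a, 1:])"
    and three_le_n: "3 \<le> n"
  defines "gap \<equiv> second_smallest_eigenvalue (laplacian n E)"
  obtains i0 where "i0 < n" "d i0 = 0" "0 < gap" "gap \<le> real (card E)"
    "\<And>i. i < n \<Longrightarrow> i \<noteq> i0 \<Longrightarrow> gap \<le> d i"
proof -
  obtain i0 where i0: "i0 < n" "d i0 = 0" and pos: "\<And>i. i < n \<Longrightarrow> i \<noteq> i0 \<Longrightarrow> 0 < d i"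
    using zero_eigenvalue_simple by blast
  have gap_eq: "gap = Min (d ` ({..<n} - {i0}))"
    unfolding gap_def using cp i0 pos two_le_n
    by (intro second_smallest_eigenvalue_eq) (auto simp: laplacian_def)
  have gap_le: "gap \<le> d i" if "i < n" "i \<noteq> i0" for i
    unfolding gap_eq using that by (intro Min_le) auto
  have "(if i0 = 0 then 1 else 0) \<in> {..<n} - {i0}" using two_le_n by auto
  hence "gap \<in> d ` ({..<n} - {i0})" unfolding gap_eq by (intro Min_in) auto
  hence "0 < gap" using pos by auto
  moreover have "gap \<le> real (card E)" by (rule spectral_gap_le_card[OF three_le_n i0(1) gap_le])
  ultimately show ?thesis using that i0 gap_le by blast
qed

lemma expected_rank_error_bound:
  assumes cp: "char_poly (laplacian n E) = (\<Prod>a\<leftarrow>map d [0..<n]. [:- a, 1:])"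
    and three_le_n: "3 \<le> n" and k: "k \<in> {1..n}" and t: "1 \<le> t"
  shows "\<bar>expected_rank n E X k t - real (rank_of n X k)\<bar>
         \<le> real n powr (3/2) * phi ((real (rank_of n X k) - 1) / real n)
            / (second_smallest_eigenvalue (laplacian n E) / real (card E) * real t)"
proof -
  define gap where "gap = second_smallest_eigenvalue (laplacian n E)"
  obtain i0 where i0: "i0 < n" "d i0 = 0" and gap: "0 < gap" "gap \<le> real (card E)"
    "\<And>i. i < n \<Longrightarrow> i \<noteq> i0 \<Longrightarrow> gap \<le> d i"
    using second_smallest_laplacian_eigenvalue[OF cp three_le_n] unfolding gap_def by blast
  define a where "a v = (if X k > X v then 1 else 0 :: real)" for v
  define m where "m = real (card {l \<in> {1..n}. X k > X l})"
  have sum_a: "(\<Sum>w\<in>{1..n}. a w) = m"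
    unfolding a_def m_def by (simp add: sum.inter_filter[symmetric])
  have sum_a2: "(\<Sum>w\<in>{1..n}. a w ^ 2) = m"
    unfolding sum_a[symmetric] by (intro sum.cong refl) (simp add: a_def)
  have n_pos: "0 < real n" and t_pos: "0 < real t" using two_le_n t by simp_all
  have "expected_rank n E X k t - real (rank_of n X k)
      = real n / real t * ((\<Sum>j<t. (swap_avg E ^^ j) a k) - real t * m / real n)"
    unfolding expected_rank_eq_swap_avg_sum[OF simple_graph_finite[OF simple] edges_nonempty t]
      rank_of_def m_def a_def using n_pos t_pos by (simp add: field_simps)
  hence "\<bar>expected_rank n E X k t - real (rank_of n X k)\<bar>
      = real n / real t * \<bar>(\<Sum>j<t. (swap_avg E ^^ j) a k) - real t * m / real n\<bar>"
    using n_pos t_pos by (simp add: abs_mult)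
  also have "\<dots> \<le> real n / real t * (real (card E) / gap * sqrt (m - m\<^sup>2 / real n))"
    using swap_avg_sum_deviation[OF i0 gap k, where t = t and a = a]
    unfolding sum_a sum_a2 by (rule mult_left_mono) auto
  also have "sqrt (m - m\<^sup>2 / real n) = sqrt (real n) * phi (m / real n)"
    unfolding phi_def real_sqrt_mult[symmetric] using n_pos by (simp add: field_simps power2_eq_square)
  also have "real n / real t * (real (card E) / gap * (sqrt (real n) * phi (m / real n)))
      = real n powr (3/2) * phi (m / real n) / (gap / real (card E) * real t)"
    using powr_add[of "real n" 1 "1/2"] n_pos gap(1) card_edges_pos by (simp add: powr_half_sqrt field_simps)
  finally show ?thesis unfolding gap_def rank_of_def m_def by simp
qed

end

theorem theorem1:
  fixes n :: nat and E :: "nat set set" and X :: "nat \<Rightarrow> real"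
  assumes "n \<ge> 2"
    and "simple_graph n E"
    and "connected_graph n E"
    and "\<not> bipartite n E"
    and "inj_on X {1..n}"
  defines "c \<equiv> second_smallest_eigenvalue (laplacian n E) / real (card E)"
  shows "\<forall>k\<in>{1..n}.
           (\<forall>t\<ge>1. \<bar>expected_rank n E X k t - real (rank_of n X k)\<bar>
                    \<le> real n powr (3/2) * phi ((real (rank_of n X k) - 1) / real n) / (c * real t))
         \<and> (\<lambda>t. expected_rank n E X k t) \<longlonglongrightarrow> real (rank_of n X k)"
proof (intro ballI conjI)
  fix k assume k: "k \<in> {1..n}"
  obtain u d where basis: "laplacian_eigenbasis n E u d"
    and cp: "char_poly (laplacian n E) = (\<Prod>a\<leftarrow>map d [0..<n]. [:- a, 1:])"
    using laplacian_eigenbasis_exists[OF assms(2)] by blast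
  interpret connected_laplacian_eigenbasis n E u d
    using basis assms(1,3) by (simp add: connected_laplacian_eigenbasis_def connected_laplacian_eigenbasis_axioms_def)
  let ?r = "real (rank_of n X k)"
  define C where "C = real n powr (3/2) * phi ((?r - 1) / real n) / c"
  have bound: "\<bar>expected_rank n E X k t - ?r\<bar> \<le> C / real t" if "1 \<le> t" for t
    using expected_rank_error_bound[OF cp not_bipartite_three_le[OF assms(2,4)] k that]
    unfolding C_def c_def by simp
  thus "\<forall>t\<ge>1. \<bar>expected_rank n E X k t - ?r\<bar> \<le> real n powr (3/2) * phi ((?r - 1) / real n) / (c * real t)"
    unfolding C_def by simp
  have "(\<lambda>t. expected_rank n E X k t - ?r) \<longlonglongrightarrow> 0"
    by (rule Lim_null_comparison[OF eventually_sequentiallyI[of 1] lim_const_over_n[of C]]) (simp add: bound)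
  thus "(\<lambda>t. expected_rank n E X k t) \<longlonglongrightarrow> ?r" by (rule LIM_zero_cancel)
qed

end
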